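(* Let $I:(0,1)\to(0,1)$ be a nondecreasing function. Then $I$ satisfies $$\int_0^t\frac{ds}{I(s)}\lesssim\frac{t}{I(t)},\quad t\in(0,1),$$ if and only if $$\sup_{0<s\le t}I(s)f^{**}(s)\approx\sup_{0<s\le t}I(s)f^*(s),\quad f\in\mathcal M_+(0,1),\ t\in(0,1).$$ In this case $m_I=M_I$ with equivalent norms.
   Context: $\mathcal M_+(0,1)$: nonnegative measurable functions on $(0,1)$; $f^*$ the nonincreasing rearrangement; $f^{**}(t)=\frac1t\int_0^tf^*(s)ds$. $\|f\|_{m_I}=\sup_{0<t<1}I(t)f^*(t)$, $\|f\|_{M_I}=\sup_{0<t<1}I(t)f^{**}(t)$, with $m_I$, $M_I$ the corresponding sets of functions with finite quantity. $\lesssim$, $\approx$ denote inequalities up to constants independent of $f$ and $t$. *)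

theory Defs
  imports "HOL-Analysis.Analysis"
begin

text \<open>Nonnegative (possibly infinite-valued) Lebesgue measurable functions on (0,1).
  Values outside (0,1) are irrelevant: everything below only looks at (0,1).\<close>
definition Mplus :: "(real \<Rightarrow> ennreal) set" where
  "Mplus = borel_measurable lborel"

definition distr_fn :: "(real \<Rightarrow> ennreal) \<Rightarrow> ennreal \<Rightarrow> ennreal" where
  "distr_fn f s = emeasure lborel {x \<in> {0<..<1}. s < f x}"

definition rearr :: "(real \<Rightarrow> ennreal) \<Rightarrow> real \<Rightarrow> ennreal" where
  "rearr f t = Inf {s. distr_fn f s \<le> ennreal t}"

definition maxfn :: "(real \<Rightarrow> ennreal) \<Rightarrow> real \<Rightarrow> ennreal" where
  "maxfn f t = (\<integral>\<^sup>+ s. rearr f s * indicator {0<..<t} s \<partial>lborel) / ennreal t"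

definition norm_m :: "(real \<Rightarrow> real) \<Rightarrow> (real \<Rightarrow> ennreal) \<Rightarrow> ennreal" where
  "norm_m I f = (SUP t\<in>{0<..<1}. ennreal (I t) * rearr f t)"

definition norm_M :: "(real \<Rightarrow> real) \<Rightarrow> (real \<Rightarrow> ennreal) \<Rightarrow> ennreal" where
  "norm_M I f = (SUP t\<in>{0<..<1}. ennreal (I t) * maxfn f t)"

definition space_m :: "(real \<Rightarrow> real) \<Rightarrow> (real \<Rightarrow> ennreal) set" where
  "space_m I = {f \<in> Mplus. norm_m I f < \<infinity>}"

definition space_M :: "(real \<Rightarrow> real) \<Rightarrow> (real \<Rightarrow> ennreal) set" where
  "space_M I = {f \<in> Mplus. norm_M I f < \<infinity>}"

end

(* If int_0^t ds/I(s) <= C t/I(t), then for 0 < s <= t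
     int_0^s f* <= (sup_{u<=t} I(u) f*(u)) int_0^s ds/I(s) <= C s/I(s) sup_{u<=t} I(u) f*(u),
   so I f** is dominated by C times the running supremum of I f*; the converse
   domination is trivial because f* <= f**. Taking the supremum over t gives the norm
   equivalence. Conversely, test the supremum inequality on g = 1/I on (0,t): as I is
   nondecreasing, I g* <= 1 on (0,t] and g*(s) >= 1/I(2s), whence
     int_0^t ds/I(s) = 2 int_0^{t/2} ds/I(2s) <= 2 t g**(t) <= 2 C t/I(t). *)
theory Submission
  imports Defs
begin

lemma ennreal_mult_le_iff_le_inverse_mult:
  assumes "0 < a" shows "ennreal a * x \<le> y \<longleftrightarrow> x \<le> ennreal (1 / a) * y"
proof -
  have inverse: "ennreal (1 / a) * ennreal a = 1"
    using assms by (simp add: ennreal_mult[symmetric])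
  show ?thesis
  proof
    assume "ennreal a * x \<le> y"
    then have "ennreal (1 / a) * (ennreal a * x) \<le> ennreal (1 / a) * y"
      by (rule mult_left_mono) simp
    then show "x \<le> ennreal (1 / a) * y" by (simp add: mult.assoc[symmetric] inverse)
  next
    assume "x \<le> ennreal (1 / a) * y"
    then have "ennreal a * x \<le> ennreal a * (ennreal (1 / a) * y)"
      by (rule mult_left_mono) simp
    then show "ennreal a * x \<le> y"
      by (simp add: mult.assoc[symmetric] mult.commute[of "ennreal a"] inverse)
  qed
qed

lemma ennreal_mult_le_max_one_mult: "ennreal C * y \<le> ennreal (max C 1) * y"
  by (intro mult_right_mono ennreal_leI) simp_all

lemma le_ennreal_max_one_mult: "y \<le> ennreal (max C 1) * (y :: ennreal)"
  using mult_right_mono[of 1 "ennreal (max C 1)" y] by simp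

lemma rearr_antimono: "s \<le> s' \<Longrightarrow> rearr f s' \<le> rearr f s"
  unfolding rearr_def by (rule Inf_superset_mono) (auto intro: order_trans[OF _ ennreal_leI])

lemma rearr_le_if_distr_fn_le: "distr_fn f y \<le> ennreal s \<Longrightarrow> rearr f s \<le> y"
  unfolding rearr_def by (rule Inf_lower) simp

lemma le_rearr_if_le_on_interval:
  assumes f: "f \<in> borel_measurable borel" and "0 \<le> s" "s < a" "a \<le> 1"
    and le_f: "\<And>x. x \<in> {0<..<a} \<Longrightarrow> y \<le> f x"
  shows "y \<le> rearr f s"
  unfolding rearr_def
proof (rule Inf_greatest, rule ccontr)
  fix l assume "l \<in> {l. distr_fn f l \<le> ennreal s}" and "\<not> y \<le> l"
  then have l: "distr_fn f l \<le> ennreal s" "l < y" by (auto simp: not_le)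
  have "{0<..<a} \<subseteq> {x \<in> {0<..<1}. l < f x}"
    using le_f l(2) \<open>a \<le> 1\<close> by (auto intro: less_le_trans)
  moreover have "{x \<in> {0<..<1}. l < f x} \<in> sets lborel"
    using f by measurable
  ultimately have "emeasure lborel {0<..<a} \<le> distr_fn f l"
    unfolding distr_fn_def by (rule emeasure_mono)
  with l(1) have "ennreal a \<le> ennreal s"
    using \<open>0 \<le> s\<close> \<open>s < a\<close> by (simp del: ennreal_le_iff)
  with \<open>0 \<le> s\<close> \<open>s < a\<close> show False by (simp add: ennreal_le_iff)
qed

lemma rearr_le_maxfn:
  assumes "0 < s" shows "rearr f s \<le> maxfn f s"
proof -
  have "rearr f s * ennreal s = (\<integral>\<^sup>+ u. rearr f s * indicator {0<..<s} u \<partial>lborel)"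
    using assms by (simp add: nn_integral_cmult_indicator)
  also have "\<dots> \<le> (\<integral>\<^sup>+ u. rearr f u * indicator {0<..<s} u \<partial>lborel)"
    by (rule nn_integral_mono) (auto simp: indicator_def intro: rearr_antimono)
  finally have "rearr f s * ennreal s / ennreal s \<le> maxfn f s"
    unfolding maxfn_def by (rule divide_right_mono_ennreal)
  then show ?thesis using assms by (simp add: ennreal_mult_divide_eq)
qed

lemma sup_rearr_le_sup_maxfn:
  "S \<subseteq> {0<..} \<Longrightarrow> (SUP s\<in>S. ennreal (w s) * rearr f s) \<le> (SUP s\<in>S. ennreal (w s) * maxfn f s)"
  by (intro SUP_mono) (auto intro!: bexI mult_left_mono rearr_le_maxfn)

lemma norm_m_le_norm_M: "norm_m I f \<le> norm_M I f"
  unfolding norm_m_def norm_M_def by (rule sup_rearr_le_sup_maxfn) auto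

lemma space_m_eq_space_M:
  assumes "\<And>f. norm_M I f \<le> ennreal C * norm_m I f"
  shows "space_m I = space_M I"
proof -
  have "norm_m I f < \<infinity> \<longleftrightarrow> norm_M I f < \<infinity>" for f
  proof
    assume "norm_m I f < \<infinity>"
    then have "ennreal C * norm_m I f < \<infinity>" by (simp add: ennreal_mult_less_top)
    with assms[of f] show "norm_M I f < \<infinity>" by (rule le_less_trans)
  qed (rule le_less_trans[OF norm_m_le_norm_M])
  then show ?thesis unfolding space_m_def space_M_def by auto
qed

lemma nn_integral_le_bound_times_nn_integral_inverse:
  assumes meas: "(\<lambda>u. ennreal (1 / w u) * indicator A u) \<in> borel_measurable borel"
    and pos: "\<And>u. u \<in> A \<Longrightarrow> 0 < w u"
    and bound: "\<And>u. u \<in> A \<Longrightarrow> ennreal (w u) * g u \<le> K"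
  shows "(\<integral>\<^sup>+ u. g u * indicator A u \<partial>lborel)
    \<le> K * (\<integral>\<^sup>+ u. ennreal (1 / w u) * indicator A u \<partial>lborel)"
proof -
  have "g u \<le> ennreal (1 / w u) * K" if "u \<in> A" for u
    using bound[OF that] ennreal_mult_le_iff_le_inverse_mult[OF pos[OF that]] by simp
  then have "(\<integral>\<^sup>+ u. g u * indicator A u \<partial>lborel)
      \<le> (\<integral>\<^sup>+ u. K * (ennreal (1 / w u) * indicator A u) \<partial>lborel)"
    by (intro nn_integral_mono) (simp add: indicator_def mult.commute)
  also have "\<dots> = K * (\<integral>\<^sup>+ u. ennreal (1 / w u) * indicator A u \<partial>lborel)"
    using meas by (simp add: nn_integral_cmult)
  finally show ?thesis .
qed

definition inverse_weight :: "(real \<Rightarrow> real) \<Rightarrow> real \<Rightarrow> real \<Rightarrow> ennreal" where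
  "inverse_weight I t s = ennreal (1 / I s) * indicator {0<..<t} s"

definition inverse_integral_bound :: "(real \<Rightarrow> real) \<Rightarrow> real \<Rightarrow> bool" where
  "inverse_integral_bound I C \<longleftrightarrow>
    (\<forall>t\<in>{0<..<1}. (\<integral>\<^sup>+ s. ennreal (1 / I s) * indicator {0<..<t} s \<partial>lborel) \<le> ennreal (C * t / I t))"

definition weighted_sup_equivalence :: "(real \<Rightarrow> real) \<Rightarrow> real \<Rightarrow> bool" where
  "weighted_sup_equivalence I C \<longleftrightarrow> (\<forall>f\<in>Mplus. \<forall>t\<in>{0<..<1}.
     (SUP s\<in>{0<..t}. ennreal (I s) * maxfn f s) \<le> ennreal C * (SUP s\<in>{0<..t}. ennreal (I s) * rearr f s)
   \<and> (SUP s\<in>{0<..t}. ennreal (I s) * rearr f s) \<le> ennreal C * (SUP s\<in>{0<..t}. ennreal (I s) * maxfn f s))"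

locale monotone_weight =
  fixes I :: "real \<Rightarrow> real"
  assumes pos: "\<And>t. t \<in> {0<..<1} \<Longrightarrow> 0 < I t"
    and mono: "mono_on {0<..<1} I"
begin

lemma measurable_inverse_weight:
  assumes "t \<le> 1" shows "inverse_weight I t \<in> borel_measurable borel"
proof -
  have "I \<in> borel_measurable (restrict_space borel {0<..<1})"
    using mono by (rule borel_measurable_mono_on_fnc)
  then have "(\<lambda>s. ennreal (1 / I s)) \<in> borel_measurable (restrict_space borel {0<..<1})"
    by measurable
  then have "(\<lambda>s. ennreal (1 / I s) * indicator {0<..<1} s) \<in> borel_measurable borel"
    by (simp add: borel_measurable_restrict_space_iff_ennreal)
  then have "(\<lambda>s. ennreal (1 / I s) * indicator {0<..<1} s * indicator {0<..<t} s)
      \<in> borel_measurable borel"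
    by measurable
  also have "(\<lambda>s. ennreal (1 / I s) * indicator {0<..<1} s * indicator {0<..<t} s) = inverse_weight I t"
    using assms by (auto simp: inverse_weight_def indicator_def)
  finally show ?thesis .
qed

lemma weighted_maxfn_le_sup_rearr:
  assumes C: "0 < C"
    and bound: "inverse_integral_bound I C"
    and s: "0 < s" "s \<le> t" and t: "t < 1"
  shows "ennreal (I s) * maxfn f s \<le> ennreal C * (SUP u\<in>{0<..t}. ennreal (I u) * rearr f u)"
proof -
  define K where "K = (SUP u\<in>{0<..t}. ennreal (I u) * rearr f u)"
  have s01: "s \<in> {0<..<1}" using s t by simp
  have "(\<integral>\<^sup>+ u. rearr f u * indicator {0<..<s} u \<partial>lborel)
      \<le> K * (\<integral>\<^sup>+ u. ennreal (1 / I u) * indicator {0<..<s} u \<partial>lborel)"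
  proof (rule nn_integral_le_bound_times_nn_integral_inverse)
    show "(\<lambda>u. ennreal (1 / I u) * indicator {0<..<s} u) \<in> borel_measurable borel"
      using measurable_inverse_weight[of s] s t by (simp add: inverse_weight_def[abs_def])
    show "0 < I u" if "u \<in> {0<..<s}" for u
      using that s t by (intro pos) simp
    show "ennreal (I u) * rearr f u \<le> K" if "u \<in> {0<..<s}" for u
      unfolding K_def using that s by (intro SUP_upper) simp
  qed
  also have "\<dots> \<le> K * ennreal (C * s / I s)"
    using bound s01 by (intro mult_left_mono) (auto simp: inverse_integral_bound_def)
  finally have "maxfn f s \<le> K * ennreal (C * s / I s) / ennreal s"
    unfolding maxfn_def by (rule divide_right_mono_ennreal)
  also have "\<dots> = ennreal (1 / I s) * (ennreal C * K)"
  proof -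
    have "ennreal (C * s / I s) / ennreal s = ennreal (C / I s)"
      using s C pos[OF s01] by (simp add: divide_ennreal)
    moreover have "ennreal (C / I s) = ennreal (1 / I s) * ennreal C"
      using C pos[OF s01] by (simp add: ennreal_mult[symmetric])
    ultimately show ?thesis by (simp add: ennreal_times_divide[symmetric] mult_ac)
  qed
  finally show ?thesis
    unfolding K_def by (simp add: ennreal_mult_le_iff_le_inverse_mult[OF pos[OF s01]])
qed

lemma sup_maxfn_le_sup_rearr:
  assumes "0 < C"
    and "inverse_integral_bound I C"
    and "t < 1"
  shows "(SUP s\<in>{0<..t}. ennreal (I s) * maxfn f s) \<le> ennreal C * (SUP s\<in>{0<..t}. ennreal (I s) * rearr f s)"
  using weighted_maxfn_le_sup_rearr[OF assms(1,2)] assms(3) by (intro SUP_least) simp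

lemma norm_M_le_norm_m:
  assumes "0 < C"
    and "inverse_integral_bound I C"
  shows "norm_M I f \<le> ennreal C * norm_m I f"
  unfolding norm_M_def
proof (rule SUP_least)
  fix t :: real assume t: "t \<in> {0<..<1}"
  have "ennreal (I t) * maxfn f t \<le> ennreal C * (SUP s\<in>{0<..t}. ennreal (I s) * rearr f s)"
    using t by (intro weighted_maxfn_le_sup_rearr[OF assms]) auto
  also have "\<dots> \<le> ennreal C * norm_m I f"
    unfolding norm_m_def using t by (intro mult_left_mono SUP_subset_mono) auto
  finally show "ennreal (I t) * maxfn f t \<le> ennreal C * norm_m I f" .
qed

lemma weighted_rearr_inverse_weight_le_1:
  assumes s: "0 < s" "s \<le> t" and t: "t < 1"
  shows "ennreal (I s) * rearr (inverse_weight I t) s \<le> 1"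
proof -
  have s01: "s \<in> {0<..<1}" using s t by simp
  have "{x \<in> {0<..<1}. ennreal (1 / I s) < inverse_weight I t x} \<subseteq> {0<..<s}"
  proof (intro subsetI, elim CollectE conjE)
    fix x :: real assume "x \<in> {0<..<1}" and less: "ennreal (1 / I s) < inverse_weight I t x"
    then have x: "0 < x" "x < 1" by auto
    have "x < t" using less by (cases "x < t") (simp_all add: inverse_weight_def)
    with less have "1 / I s < 1 / I x"
      using x pos[OF s01] by (simp add: inverse_weight_def ennreal_less_iff)
    then have "I x < I s" using x pos[OF s01] pos[of x] by (simp add: field_simps)
    then show "x \<in> {0<..<s}" using mono_onD[OF mono, of s x] s01 x by (cases "s \<le> x") auto
  qed
  then have "distr_fn (inverse_weight I t) (ennreal (1 / I s)) \<le> ennreal s"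
    unfolding distr_fn_def using emeasure_mono[of _ "{0<..<s}" lborel] s by simp
  then have "rearr (inverse_weight I t) s \<le> ennreal (1 / I s) * 1"
    by (simp add: rearr_le_if_distr_fn_le)
  then show ?thesis by (simp only: ennreal_mult_le_iff_le_inverse_mult[OF pos[OF s01]])
qed

lemma inverse_weight_dilated_le_rearr:
  assumes s: "0 < s" "2 * s < t" and t: "t \<le> 1"
  shows "ennreal (1 / I (2 * s)) \<le> rearr (inverse_weight I t) s"
proof (rule le_rearr_if_le_on_interval)
  show "inverse_weight I t \<in> borel_measurable borel" using t by (rule measurable_inverse_weight)
  fix x assume x: "x \<in> {0<..<2 * s}"
  have "I x \<le> I (2 * s)" using mono_onD[OF mono, of x "2 * s"] x s t by simp
  then have "1 / I (2 * s) \<le> 1 / I x" using x s t pos[of x] by (simp add: frac_le)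
  then show "ennreal (1 / I (2 * s)) \<le> inverse_weight I t x"
    using x s by (simp add: inverse_weight_def ennreal_leI)
qed (use s t in auto)

lemma nn_integral_inverse_weight_le_maxfn:
  assumes t: "0 < t" "t \<le> 1"
  shows "(\<integral>\<^sup>+ s. inverse_weight I t s \<partial>lborel) \<le> ennreal (2 * t) * maxfn (inverse_weight I t) t"
proof -
  let ?g = "inverse_weight I t"
  have "(\<integral>\<^sup>+ s. ?g (2 * s) \<partial>lborel) \<le> (\<integral>\<^sup>+ s. rearr ?g s * indicator {0<..<t} s \<partial>lborel)"
    using t by (intro nn_integral_mono)
      (auto simp: inverse_weight_def indicator_def intro: inverse_weight_dilated_le_rearr)
  also have "\<dots> = maxfn ?g t * ennreal t"
    using t by (simp add: maxfn_def ennreal_divide_times)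
  finally have "2 * (\<integral>\<^sup>+ s. ?g (2 * s) \<partial>lborel) \<le> 2 * (maxfn ?g t * ennreal t)"
    by (rule mult_left_mono) simp
  moreover have "(\<integral>\<^sup>+ s. ?g s \<partial>lborel) = 2 * (\<integral>\<^sup>+ s. ?g (2 * s) \<partial>lborel)"
    using nn_integral_real_affine[OF measurable_inverse_weight[OF t(2)], of 2 0] by simp
  ultimately show ?thesis
    using t by (simp add: ennreal_mult mult_ac)
qed

lemma inverse_integral_le_if_sup_maxfn_le:
  assumes C: "0 < C" and t: "t \<in> {0<..<1}"
    and bound: "(SUP s\<in>{0<..t}. ennreal (I s) * maxfn (inverse_weight I t) s)
      \<le> ennreal C * (SUP s\<in>{0<..t}. ennreal (I s) * rearr (inverse_weight I t) s)"
  shows "(\<integral>\<^sup>+ s. ennreal (1 / I s) * indicator {0<..<t} s \<partial>lborel) \<le> ennreal (2 * C * t / I t)"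
proof -
  let ?g = "inverse_weight I t"
  have "(SUP s\<in>{0<..t}. ennreal (I s) * rearr ?g s) \<le> 1"
    using t by (intro SUP_least weighted_rearr_inverse_weight_le_1) auto
  then have "ennreal C * (SUP s\<in>{0<..t}. ennreal (I s) * rearr ?g s) \<le> ennreal C * 1"
    by (rule mult_left_mono) simp
  moreover have "ennreal (I t) * maxfn ?g t \<le> (SUP s\<in>{0<..t}. ennreal (I s) * maxfn ?g s)"
    using t by (intro SUP_upper) simp
  ultimately have "ennreal (I t) * maxfn ?g t \<le> ennreal C * 1"
    using bound by order
  then have "maxfn ?g t \<le> ennreal (1 / I t) * ennreal C"
    using ennreal_mult_le_iff_le_inverse_mult[OF pos[OF t]] by simp
  moreover have "(\<integral>\<^sup>+ s. ?g s \<partial>lborel) \<le> ennreal (2 * t) * maxfn ?g t"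
    using t by (intro nn_integral_inverse_weight_le_maxfn) auto
  ultimately have "(\<integral>\<^sup>+ s. ?g s \<partial>lborel) \<le> ennreal (2 * t) * (ennreal (1 / I t) * ennreal C)"
    by (meson mult_left_mono order_trans zero_le)
  also have "\<dots> = ennreal (2 * C * t / I t)"
    using t C pos[OF t] by (simp add: ennreal_mult[symmetric])
  finally show ?thesis by (simp add: inverse_weight_def)
qed

lemma weighted_sup_equivalence_if_inverse_integral_bound:
  assumes "0 < C" and "inverse_integral_bound I C"
  shows "weighted_sup_equivalence I (max C 1)"
  unfolding weighted_sup_equivalence_def
proof (intro ballI conjI)
  fix f and t :: real assume "t \<in> {0<..<1}"
  then show "(SUP s\<in>{0<..t}. ennreal (I s) * maxfn f s)
      \<le> ennreal (max C 1) * (SUP s\<in>{0<..t}. ennreal (I s) * rearr f s)"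
    using sup_maxfn_le_sup_rearr[OF assms] ennreal_mult_le_max_one_mult
    by (meson order_trans greaterThanLessThan_iff)
  show "(SUP s\<in>{0<..t}. ennreal (I s) * rearr f s)
      \<le> ennreal (max C 1) * (SUP s\<in>{0<..t}. ennreal (I s) * maxfn f s)"
    using sup_rearr_le_sup_maxfn[of "{0<..t}"] le_ennreal_max_one_mult
    by (meson order_trans greaterThan_iff greaterThanAtMost_iff subsetI)
qed

lemma inverse_integral_bound_if_weighted_sup_equivalence:
  assumes "0 < C" and "weighted_sup_equivalence I C"
  shows "inverse_integral_bound I (2 * C)"
  unfolding inverse_integral_bound_def
proof
  fix t :: real assume t: "t \<in> {0<..<1}"
  have "inverse_weight I t \<in> Mplus"
    using t measurable_inverse_weight[of t] by (simp add: Mplus_def)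
  with assms(2) t show "(\<integral>\<^sup>+ s. ennreal (1 / I s) * indicator {0<..<t} s \<partial>lborel)
      \<le> ennreal (2 * C * t / I t)"
    unfolding weighted_sup_equivalence_def by (intro inverse_integral_le_if_sup_maxfn_le[OF assms(1) t]) blast
qed

end

theorem proposition3p6:
  fixes I :: "real \<Rightarrow> real"
  assumes range: "\<And>t. t \<in> {0<..<1} \<Longrightarrow> I t \<in> {0<..<1}"
    and mono: "mono_on {0<..<1} I"
  shows "((\<exists>C>0. \<forall>t\<in>{0<..<1}.
             (\<integral>\<^sup>+ s. ennreal (1 / I s) * indicator {0<..<t} s \<partial>lborel) \<le> ennreal (C * t / I t))
          \<longleftrightarrow>
          (\<exists>C>0. \<forall>f\<in>Mplus. \<forall>t\<in>{0<..<1}.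
             (SUP s\<in>{0<..t}. ennreal (I s) * maxfn f s) \<le> ennreal C * (SUP s\<in>{0<..t}. ennreal (I s) * rearr f s)
           \<and> (SUP s\<in>{0<..t}. ennreal (I s) * rearr f s) \<le> ennreal C * (SUP s\<in>{0<..t}. ennreal (I s) * maxfn f s)))
       \<and> ((\<exists>C>0. \<forall>t\<in>{0<..<1}.
             (\<integral>\<^sup>+ s. ennreal (1 / I s) * indicator {0<..<t} s \<partial>lborel) \<le> ennreal (C * t / I t))
          \<longrightarrow> space_m I = space_M I
            \<and> (\<exists>C>0. \<forall>f\<in>Mplus. norm_M I f \<le> ennreal C * norm_m I f \<and> norm_m I f \<le> ennreal C * norm_M I f))"
proof -
  interpret monotone_weight I
    using range mono by unfold_locales auto
  have equivalence: "(\<exists>C>0. inverse_integral_bound I C) \<longleftrightarrow> (\<exists>C>0. weighted_sup_equivalence I C)"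
    using weighted_sup_equivalence_if_inverse_integral_bound inverse_integral_bound_if_weighted_sup_equivalence
    by (metis max.strict_coboundedI2 zero_less_one mult_pos_pos zero_less_numeral)
  have norms: "space_m I = space_M I
      \<and> (\<exists>C>0. \<forall>f\<in>Mplus. norm_M I f \<le> ennreal C * norm_m I f \<and> norm_m I f \<le> ennreal C * norm_M I f)"
    if "0 < C" and "inverse_integral_bound I C" for C
  proof (intro conjI exI[of _ "max C 1"] ballI)
    show "space_m I = space_M I" using norm_M_le_norm_m[OF that] by (rule space_m_eq_space_M)
    fix f
    show "norm_M I f \<le> ennreal (max C 1) * norm_m I f"
      using norm_M_le_norm_m[OF that] ennreal_mult_le_max_one_mult by (rule order_trans)
    show "norm_m I f \<le> ennreal (max C 1) * norm_M I f"
      using norm_m_le_norm_M le_ennreal_max_one_mult by (rule order_trans)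
  qed simp
  show ?thesis
    using equivalence norms unfolding inverse_integral_bound_def weighted_sup_equivalence_def by blast
qed

end
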